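(* Let $D\subseteq\mathbb{R}^s$ be closed and $\bar y\in D$. Then for every integer $l\ge1$ and every collection of directions $v_1,\dots,v_l\in\mathbb{R}^s$ we have \[\widehat N_{T^{l-1}_D(\bar y;v_1,\dots,v_{l-1})}(v_l)\subseteq N_{T^{l-1}_D(\bar y;v_1,\dots,v_{l-1})}(v_l)\subseteq N_{T_D(\bar y)}(0)\subseteq N_D(\bar y).\]
   Context: Tangent cone: $T_\Omega(\bar z)=\{w\mid \exists t_k\downarrow0,\ w_k\to w,\ \bar z+t_kw_k\in\Omega\}$. Regular normal cone $\widehat N_\Omega(\bar z)=\{z^\ast\mid\langle z^\ast,w\rangle\le0\ \forall w\in T_\Omega(\bar z)\}$. Limiting normal cone $N_\Omega(\bar z)=\{z^\ast\mid\exists z_k\to\bar z,\ z_k\in\Omega,\ z^\ast_k\to z^\ast,\ z_k^\ast\in\widehat N_\Omega(z_k)\}$. If $\bar z\notin\Omega$, all three cones are defined to be $\emptyset$. Higher-order tangent cones: $T^0_D(\bar y)=T_D(\bar y)$ and $T^k_D(\bar y;v_1,\dots,v_k)=T_{T^{k-1}_D(\bar y;v_1,\dots,v_{k-1})}(v_k)$ for $k\ge1$. *)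

theory Defs
  imports "HOL-Analysis.Analysis"
begin

definition tangent_cone :: "('a::real_normed_vector) set \<Rightarrow> 'a \<Rightarrow> 'a set" where
  "tangent_cone \<Omega> z = (if z \<in> \<Omega> then
     {w. \<exists>t wk. (\<forall>k. t k > (0::real)) \<and> t \<longlonglongrightarrow> 0 \<and> wk \<longlonglongrightarrow> w \<and>
                 (\<forall>k. z + t k *\<^sub>R wk k \<in> \<Omega>)}
   else {})"

definition regular_normal_cone :: "('a::real_inner) set \<Rightarrow> 'a \<Rightarrow> 'a set" where
  "regular_normal_cone \<Omega> z = (if z \<in> \<Omega> then
     {zs. \<forall>w\<in>tangent_cone \<Omega> z. zs \<bullet> w \<le> 0}
   else {})"

definition limiting_normal_cone :: "('a::real_inner) set \<Rightarrow> 'a \<Rightarrow> 'a set" where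
  "limiting_normal_cone \<Omega> z = (if z \<in> \<Omega> then
     {zs. \<exists>zk zsk. zk \<longlonglongrightarrow> z \<and> (\<forall>k. zk k \<in> \<Omega>) \<and> zsk \<longlonglongrightarrow> zs \<and>
                  (\<forall>k. zsk k \<in> regular_normal_cone \<Omega> (zk k))}
   else {})"

text \<open>Higher-order tangent cones: \<open>ho_tangent_cone D y v k\<close> is
  \<open>T^k_D(y; v 1, ..., v k)\<close>, with directions indexed from 1.\<close>
fun ho_tangent_cone :: "('a::real_normed_vector) set \<Rightarrow> 'a \<Rightarrow> (nat \<Rightarrow> 'a) \<Rightarrow> nat \<Rightarrow> 'a set" where
  "ho_tangent_cone D y v 0 = tangent_cone D y"
| "ho_tangent_cone D y v (Suc k) = tangent_cone (ho_tangent_cone D y v k) (v (Suc k))"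

end

theory Submission
  imports Defs
begin

(* Tangent cones are cones, so N_T(w) is contained in N_T(0) for T = T_D(y); they are also
  closed, so the chain reduces to one fact applied at every level: for closed C and w in
  T = T_C(x), every limiting normal to T at w is a limiting normal to C at x.  As N_C(x) is
  closed, it suffices to approximate a regular normal v to T at w.  Take t_k -> 0 and w_k -> w
  with x + t_k w_k in C and project x + t_k (w + delta v) onto C, giving points x + t_k q_k that
  carry the proximal normals (w + delta v - q_k) / delta.  A limit point l of the q_k lies in T
  and in the ball around w + delta v of radius delta |v|; regularity of v at w forces |l - w| to
  be small compared with delta, so these proximal normals approach v while their base points
  approach x. *)

lemma mem_tangent_cone_iff:
  "w \<in> tangent_cone C x \<longleftrightarrow> x \<in> C \<and> (\<exists>t wk. (\<forall>k. t k > (0::real)) \<and> t \<longlonglongrightarrow> 0 \<and> wk \<longlonglongrightarrow> w \<and>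
     (\<forall>k. x + t k *\<^sub>R wk k \<in> C))"
  by (simp add: tangent_cone_def)

lemma mem_regular_normal_cone_iff:
  "u \<in> regular_normal_cone C z \<longleftrightarrow> z \<in> C \<and> (\<forall>w\<in>tangent_cone C z. u \<bullet> w \<le> 0)"
  by (simp add: regular_normal_cone_def)

lemma mem_limiting_normal_cone_iff:
  "u \<in> limiting_normal_cone C z \<longleftrightarrow> z \<in> C \<and> (\<exists>zk uk. zk \<longlonglongrightarrow> z \<and> (\<forall>k. zk k \<in> C) \<and> uk \<longlonglongrightarrow> u \<and>
     (\<forall>k. uk k \<in> regular_normal_cone C (zk k)))"
  by (simp add: limiting_normal_cone_def)

lemma tangent_cone_base: "w \<in> tangent_cone C x \<Longrightarrow> x \<in> C"
  by (simp add: tangent_cone_def split: if_splits)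

lemma LIMSEQ_dist_less_inverse_Suc:
  fixes X :: "nat \<Rightarrow> 'a::real_normed_vector"
  assumes "\<And>n. dist (X n) L < 1 / real (Suc n)"
  shows "X \<longlonglongrightarrow> L"
  using LIMSEQ_norm_0[of "\<lambda>n. X n - L"] assms by (simp add: dist_norm LIM_zero_iff)

lemma tangent_cone_approachable:
  "w \<in> tangent_cone C x \<longleftrightarrow>
     x \<in> C \<and> (\<forall>e>0. \<exists>t w'. 0 < t \<and> t < e \<and> dist w' w < e \<and> x + t *\<^sub>R w' \<in> C)"
proof (intro iffI conjI allI impI)
  assume w: "w \<in> tangent_cone C x"
  then show "x \<in> C" by (rule tangent_cone_base)
  from w obtain t wk where t: "\<forall>k. t k > 0" "t \<longlonglongrightarrow> 0" "wk \<longlonglongrightarrow> w" "\<forall>k. x + t k *\<^sub>R wk k \<in> C"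
    by (auto simp: mem_tangent_cone_iff)
  fix e :: real assume "e > 0"
  then have "eventually (\<lambda>k. t k < e \<and> dist (wk k) w < e) sequentially"
    using order_tendstoD(2)[OF t(2)] tendstoD[OF t(3)] by (simp add: eventually_conj)
  then obtain k where "t k < e" "dist (wk k) w < e"
    using eventually_happens'[OF trivial_limit_sequentially] by blast
  then show "\<exists>t w'. 0 < t \<and> t < e \<and> dist w' w < e \<and> x + t *\<^sub>R w' \<in> C"
    using t(1,4) by blast
next
  assume "x \<in> C \<and> (\<forall>e>0. \<exists>t w'. 0 < t \<and> t < e \<and> dist w' w < e \<and> x + t *\<^sub>R w' \<in> C)"
  then have "x \<in> C" and "\<forall>n. \<exists>t w'. 0 < t \<and> t < 1 / real (Suc n) \<and>
      dist w' w < 1 / real (Suc n) \<and> x + t *\<^sub>R w' \<in> C"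
    by simp_all
  then obtain t wk where t: "\<forall>n. 0 < t n \<and> t n < 1 / real (Suc n) \<and>
      dist (wk n) w < 1 / real (Suc n) \<and> x + t n *\<^sub>R wk n \<in> C"
    by metis
  have "dist (t n) 0 < 1 / real (Suc n)" "dist (wk n) w < 1 / real (Suc n)" for n
    using t[rule_format, of n] by (simp_all add: dist_real_def abs_of_pos)
  then have "t \<longlonglongrightarrow> 0" "wk \<longlonglongrightarrow> w"
    by (auto intro: LIMSEQ_dist_less_inverse_Suc)
  then show "w \<in> tangent_cone C x"
    using t \<open>x \<in> C\<close> by (auto simp: mem_tangent_cone_iff)
qed

lemma closed_tangent_cone: "closed (tangent_cone C x)"
  unfolding closure_subset_eq[symmetric]
proof
  fix w assume "w \<in> closure (tangent_cone C x)"
  then have near: "\<forall>e>0. \<exists>w'\<in>tangent_cone C x. dist w' w < e"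
    by (simp add: closure_approachable)
  show "w \<in> tangent_cone C x"
    unfolding tangent_cone_approachable[of w]
  proof (intro conjI allI impI)
    show "x \<in> C"
      using near[rule_format, of 1] tangent_cone_base by auto
    fix e :: real assume "e > 0"
    then obtain w' where w': "w' \<in> tangent_cone C x" "dist w' w < e / 2"
      using near half_gt_zero by blast
    then obtain t w'' where "0 < t" "t < e / 2" "dist w'' w' < e / 2" "x + t *\<^sub>R w'' \<in> C"
      using \<open>e > 0\<close> half_gt_zero tangent_cone_approachable[of w'] by meson
    then show "\<exists>t w'. 0 < t \<and> t < e \<and> dist w' w < e \<and> x + t *\<^sub>R w' \<in> C"
      using w'(2) dist_triangle[of w'' w w'] by (intro exI[of _ t] exI[of _ w'']) auto
  qed
qed

lemma cone_tangent_cone: "cone (tangent_cone C x)"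
  unfolding cone_def
proof (intro ballI allI impI)
  fix w and c :: real assume w: "w \<in> tangent_cone C x" and "c \<ge> 0"
  from w obtain t wk where t: "\<forall>k. t k > 0" "t \<longlonglongrightarrow> 0" "wk \<longlonglongrightarrow> w" "\<forall>k. x + t k *\<^sub>R wk k \<in> C"
    by (auto simp: mem_tangent_cone_iff)
  have "x \<in> C" using w by (rule tangent_cone_base)
  show "c *\<^sub>R w \<in> tangent_cone C x"
  proof (cases "c = 0")
    case True
    then show ?thesis
      using t(1,2) \<open>x \<in> C\<close> unfolding mem_tangent_cone_iff
      by (intro conjI exI[of _ t] exI[of _ "\<lambda>k. 0"]) auto
  next
    case False
    with \<open>c \<ge> 0\<close> have "c > 0" by simp
    have "(\<lambda>k. t k / c) \<longlonglongrightarrow> 0" "(\<lambda>k. c *\<^sub>R wk k) \<longlonglongrightarrow> c *\<^sub>R w"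
      using tendsto_divide_zero[OF t(2)] by (auto intro: tendsto_intros t(3))
    moreover have "x + (t k / c) *\<^sub>R (c *\<^sub>R wk k) \<in> C" for k
      using t(4) \<open>c > 0\<close> by simp
    ultimately show ?thesis
      using t(1) \<open>c > 0\<close> \<open>x \<in> C\<close> unfolding mem_tangent_cone_iff
      by (intro conjI exI[of _ "\<lambda>k. t k / c"] exI[of _ "\<lambda>k. c *\<^sub>R wk k"]) auto
  qed
qed

lemma tangent_cone_scaleR_of_cone:
  assumes "cone K" and "c > 0"
  shows "tangent_cone K (c *\<^sub>R z) = tangent_cone K z"
proof -
  have grow: "tangent_cone K z \<subseteq> tangent_cone K (c *\<^sub>R z)" if "c > 0" for c z
  proof
    fix u assume "u \<in> tangent_cone K z"
    then obtain t wk where t: "z \<in> K" "\<forall>k. t k > 0" "t \<longlonglongrightarrow> 0" "wk \<longlonglongrightarrow> u"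
        "\<forall>k. z + t k *\<^sub>R wk k \<in> K"
      by (auto simp: mem_tangent_cone_iff)
    have "c *\<^sub>R z + (c * t k) *\<^sub>R wk k \<in> K" for k
      using mem_cone[OF \<open>cone K\<close> t(5)[rule_format, of k], of c] \<open>c > 0\<close>
      by (simp add: scaleR_add_right)
    moreover have "(\<lambda>k. c * t k) \<longlonglongrightarrow> 0"
      using tendsto_mult_right_zero[OF t(3)] by simp
    ultimately show "u \<in> tangent_cone K (c *\<^sub>R z)"
      using t mem_cone[OF \<open>cone K\<close> t(1), of c] \<open>c > 0\<close> unfolding mem_tangent_cone_iff
      by (intro conjI exI[of _ "\<lambda>k. c * t k"] exI[of _ wk]) auto
  qed
  show ?thesis
    using grow[OF \<open>c > 0\<close>, of z] grow[of "inverse c" "c *\<^sub>R z"] \<open>c > 0\<close> by auto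
qed

lemma regular_normal_cone_scaleR_of_cone:
  assumes "cone K" and "c > 0"
  shows "regular_normal_cone K (c *\<^sub>R z) = regular_normal_cone K z"
proof -
  have "c *\<^sub>R z \<in> K \<longleftrightarrow> z \<in> K"
    using mem_cone[OF \<open>cone K\<close>, of z c] mem_cone[OF \<open>cone K\<close>, of "c *\<^sub>R z" "inverse c"] assms
    by auto
  then show ?thesis
    using tangent_cone_scaleR_of_cone[OF assms] by (simp add: regular_normal_cone_def)
qed

lemma limiting_normal_cone_subset_at_0_of_cone:
  assumes "cone K"
  shows "limiting_normal_cone K w \<subseteq> limiting_normal_cone K 0"
proof
  fix v assume "v \<in> limiting_normal_cone K w"
  then obtain zk uk where z: "w \<in> K" "zk \<longlonglongrightarrow> w" "\<forall>k. zk k \<in> K" "uk \<longlonglongrightarrow> v"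
      "\<forall>k. uk k \<in> regular_normal_cone K (zk k)"
    by (auto simp: mem_limiting_normal_cone_iff)
  define zk' where "zk' k = inverse (real (Suc k)) *\<^sub>R zk k" for k
  have "zk' \<longlonglongrightarrow> 0"
    unfolding zk'_def using tendsto_scaleR[OF LIMSEQ_inverse_real_of_nat z(2)] by simp
  moreover have "zk' k \<in> K" for k
    using mem_cone[OF assms] z(3) by (simp add: zk'_def)
  moreover have "uk k \<in> regular_normal_cone K (zk' k)" for k
    using z(5) regular_normal_cone_scaleR_of_cone[OF assms] by (simp add: zk'_def)
  moreover have "0 \<in> K"
    using cone_contains_0[OF assms] z(1) by blast
  ultimately show "v \<in> limiting_normal_cone K 0"
    using z(4) unfolding mem_limiting_normal_cone_iff by blast
qed

lemma regular_normal_cone_subset_limiting_normal_cone: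
  "regular_normal_cone C x \<subseteq> limiting_normal_cone C x"
proof
  fix v assume v: "v \<in> regular_normal_cone C x"
  then have "x \<in> C" by (simp add: mem_regular_normal_cone_iff)
  then show "v \<in> limiting_normal_cone C x"
    using v unfolding mem_limiting_normal_cone_iff
    by (intro conjI exI[of _ "\<lambda>k. x"] exI[of _ "\<lambda>k. v"]) auto
qed

lemma limiting_normal_cone_approachable:
  "v \<in> limiting_normal_cone C x \<longleftrightarrow>
     x \<in> C \<and> (\<forall>e>0. \<exists>x'\<in>C. dist x' x < e \<and> (\<exists>u\<in>regular_normal_cone C x'. dist u v < e))"
proof (intro iffI conjI allI impI)
  assume "v \<in> limiting_normal_cone C x"
  then obtain zk uk where z: "x \<in> C" "zk \<longlonglongrightarrow> x" "\<forall>k. zk k \<in> C" "uk \<longlonglongrightarrow> v"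
      "\<forall>k. uk k \<in> regular_normal_cone C (zk k)"
    by (auto simp: mem_limiting_normal_cone_iff)
  then show "x \<in> C" by simp
  fix e :: real assume "e > 0"
  then have "eventually (\<lambda>k. dist (zk k) x < e \<and> dist (uk k) v < e) sequentially"
    using tendstoD[OF z(2)] tendstoD[OF z(4)] by (simp add: eventually_conj)
  then obtain k where "dist (zk k) x < e" "dist (uk k) v < e"
    using eventually_happens'[OF trivial_limit_sequentially] by blast
  then show "\<exists>x'\<in>C. dist x' x < e \<and> (\<exists>u\<in>regular_normal_cone C x'. dist u v < e)"
    using z(3,5) by blast
next
  assume approx: "x \<in> C \<and> (\<forall>e>0. \<exists>x'\<in>C. dist x' x < e \<and> (\<exists>u\<in>regular_normal_cone C x'. dist u v < e))"
  have "\<forall>n. \<exists>x' u. x' \<in> C \<and> dist x' x < 1 / real (Suc n) \<and>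
      u \<in> regular_normal_cone C x' \<and> dist u v < 1 / real (Suc n)"
  proof
    fix n
    show "\<exists>x' u. x' \<in> C \<and> dist x' x < 1 / real (Suc n) \<and>
        u \<in> regular_normal_cone C x' \<and> dist u v < 1 / real (Suc n)"
      using approx[THEN conjunct2, rule_format, of "1 / real (Suc n)"] by auto
  qed
  then obtain zk uk where z: "\<forall>n. zk n \<in> C \<and> dist (zk n) x < 1 / real (Suc n) \<and>
      uk n \<in> regular_normal_cone C (zk n) \<and> dist (uk n) v < 1 / real (Suc n)"
    by metis
  then have "zk \<longlonglongrightarrow> x" "uk \<longlonglongrightarrow> v"
    by (auto intro: LIMSEQ_dist_less_inverse_Suc)
  then show "v \<in> limiting_normal_cone C x"
    using z approx by (auto simp: mem_limiting_normal_cone_iff)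
qed

lemma closed_limiting_normal_cone: "closed (limiting_normal_cone C x)"
  unfolding closure_subset_eq[symmetric]
proof
  fix v assume "v \<in> closure (limiting_normal_cone C x)"
  then have near: "\<forall>e>0. \<exists>v'\<in>limiting_normal_cone C x. dist v' v < e"
    by (simp add: closure_approachable)
  show "v \<in> limiting_normal_cone C x"
    unfolding limiting_normal_cone_approachable[of v]
  proof (intro conjI allI impI)
    show "x \<in> C"
      using near[rule_format, of 1] by (auto simp: mem_limiting_normal_cone_iff)
    fix e :: real assume "e > 0"
    then obtain v' where v': "v' \<in> limiting_normal_cone C x" "dist v' v < e / 2"
      using near half_gt_zero by blast
    then obtain x' u where x': "x' \<in> C" "dist x' x < e / 2" "u \<in> regular_normal_cone C x'"
        "dist u v' < e / 2"
      using \<open>e > 0\<close> half_gt_zero limiting_normal_cone_approachable[of v'] by meson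
    have "dist x' x < e" "dist u v < e"
      using x'(2,4) v'(2) dist_triangle[of u v v'] zero_le_dist[of x' x] by linarith+
    then show "\<exists>x'\<in>C. dist x' x < e \<and> (\<exists>u\<in>regular_normal_cone C x'. dist u v < e)"
      using x'(1,3) by blast
  qed
qed

lemma proximal_normal_in_regular_normal_cone:
  assumes "z \<in> C" and nearest: "\<And>c. c \<in> C \<Longrightarrow> dist a z \<le> dist a c" and "\<mu> \<ge> 0"
  shows "\<mu> *\<^sub>R (a - z) \<in> regular_normal_cone C z"
proof -
  have "(a - z) \<bullet> u \<le> 0" if "u \<in> tangent_cone C z" for u
  proof -
    from that obtain t wk where t: "\<forall>k. t k > 0" "t \<longlonglongrightarrow> 0" "wk \<longlonglongrightarrow> u"
        "\<forall>k. z + t k *\<^sub>R wk k \<in> C"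
      by (auto simp: mem_tangent_cone_iff)
    have step: "2 * ((a - z) \<bullet> wk k) \<le> t k * (wk k \<bullet> wk k)" for k
    proof -
      have "(norm (a - z))\<^sup>2 \<le> (norm ((a - z) - t k *\<^sub>R wk k))\<^sup>2"
        using nearest[of "z + t k *\<^sub>R wk k"] t(4) by (simp add: dist_norm algebra_simps)
      then have "t k * (2 * ((a - z) \<bullet> wk k)) \<le> t k * (t k * (wk k \<bullet> wk k))"
        by (simp add: power2_norm_eq_inner inner_diff_left inner_diff_right inner_commute
            algebra_simps)
      then show ?thesis using t(1) by (simp add: mult_le_cancel_left)
    qed
    have lhs: "(\<lambda>k. 2 * ((a - z) \<bullet> wk k)) \<longlonglongrightarrow> 2 * ((a - z) \<bullet> u)"
      by (intro tendsto_intros t(3))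
    have rhs: "(\<lambda>k. t k * (wk k \<bullet> wk k)) \<longlonglongrightarrow> 0 * (u \<bullet> u)"
      by (intro tendsto_intros t(2,3))
    have "2 * ((a - z) \<bullet> u) \<le> 0 * (u \<bullet> u)"
      using tendsto_le[OF trivial_limit_sequentially rhs lhs] step by simp
    then show ?thesis by simp
  qed
  then show ?thesis
    using \<open>z \<in> C\<close> \<open>\<mu> \<ge> 0\<close> by (simp add: mem_regular_normal_cone_iff mult_nonneg_nonpos)
qed

lemma tangent_cone_subseq_limit:
  fixes C :: "'a::{real_normed_vector, heine_borel} set"
  assumes "x \<in> C" "\<forall>k. t k > 0" "t \<longlonglongrightarrow> 0" "\<forall>k. x + t k *\<^sub>R q k \<in> C" "bounded (range q)"
  obtains r l where "strict_mono r" "(q \<circ> r) \<longlonglongrightarrow> l" "l \<in> tangent_cone C x"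
proof -
  obtain r l where r: "strict_mono r" "(q \<circ> r) \<longlonglongrightarrow> l"
    using bounded_imp_convergent_subsequence[OF assms(5)] by blast
  have "(t \<circ> r) \<longlonglongrightarrow> 0"
    using LIMSEQ_subseq_LIMSEQ[OF assms(3) r(1)] .
  then have "l \<in> tangent_cone C x"
    using assms(1,2,4) r(2) unfolding mem_tangent_cone_iff
    by (intro conjI exI[of _ "t \<circ> r"] exI[of _ "q \<circ> r"]) auto
  with r show thesis by (rule that)
qed

lemma regular_normal_cone_local_bound:
  fixes K :: "'a::euclidean_space set"
  assumes v: "v \<in> regular_normal_cone K w" and "e > 0"
  obtains \<rho> where "\<rho> > 0" "\<And>q. q \<in> K \<Longrightarrow> norm (q - w) < \<rho> \<Longrightarrow> v \<bullet> (q - w) \<le> e * norm (q - w)"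
proof -
  have "\<exists>\<rho>>0. \<forall>q\<in>K. norm (q - w) < \<rho> \<longrightarrow> v \<bullet> (q - w) \<le> e * norm (q - w)"
  proof (rule ccontr)
    assume "\<not> ?thesis"
    then have far: "\<forall>\<rho>>0. \<exists>q\<in>K. norm (q - w) < \<rho> \<and> e * norm (q - w) < v \<bullet> (q - w)"
      by (auto simp: not_le)
    have "\<exists>q. q \<in> K \<and> norm (q - w) < 1 / real (Suc n) \<and> e * norm (q - w) < v \<bullet> (q - w)" for n
      using far[rule_format, of "1 / real (Suc n)"] by auto
    then obtain Q where Q: "\<forall>n. Q n \<in> K \<and> norm (Q n - w) < 1 / real (Suc n) \<and>
        e * norm (Q n - w) < v \<bullet> (Q n - w)"
      by metis
    define s where "s n = norm (Q n - w)" for n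
    define U where "U n = (1 / s n) *\<^sub>R (Q n - w)" for n
    have s_pos: "s n > 0" for n
      using Q[rule_format, of n] by (auto simp: s_def)
    have "s \<longlonglongrightarrow> 0"
      using Q by (intro LIMSEQ_dist_less_inverse_Suc) (simp add: s_def)
    moreover have "w + s n *\<^sub>R U n \<in> K" "norm (U n) = 1" for n
      using Q s_pos[of n] by (simp_all add: U_def s_def)
    moreover have "v \<bullet> U n \<ge> e" for n
      using Q[rule_format, of n] s_pos[of n] by (simp add: U_def s_def pos_le_divide_eq)
    moreover have "w \<in> K"
      using v by (simp add: mem_regular_normal_cone_iff)
    ultimately obtain r l where r: "strict_mono r" "(U \<circ> r) \<longlonglongrightarrow> l" "l \<in> tangent_cone K w"
      using s_pos by (elim tangent_cone_subseq_limit[of w K s U]) (auto simp: bounded_iff)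
    have "(\<lambda>n. v \<bullet> (U \<circ> r) n) \<longlonglongrightarrow> v \<bullet> l"
      by (intro tendsto_intros r(2))
    then have "v \<bullet> l \<ge> e"
      using \<open>\<And>n. v \<bullet> U n \<ge> e\<close> by (intro tendsto_lowerbound) auto
    moreover have "v \<bullet> l \<le> 0"
      using v r(3) by (simp add: mem_regular_normal_cone_iff)
    ultimately show False using \<open>e > 0\<close> by simp
  qed
  then show thesis using that by blast
qed

lemma tangent_cone_nearest_points:
  fixes C :: "'a::euclidean_space set"
  assumes "closed C" and "w \<in> tangent_cone C x"
  obtains t wk q where "\<forall>k. t k > 0" "t \<longlonglongrightarrow> 0" "wk \<longlonglongrightarrow> w" "\<forall>k. x + t k *\<^sub>R q k \<in> C"
    "\<forall>k. \<forall>c\<in>C. dist (x + t k *\<^sub>R p) (x + t k *\<^sub>R q k) \<le> dist (x + t k *\<^sub>R p) c"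
    "\<forall>k. norm (p - q k) \<le> norm (p - wk k)"
proof -
  from assms(2) obtain t wk where t: "x \<in> C" "\<forall>k. t k > 0" "t \<longlonglongrightarrow> 0" "wk \<longlonglongrightarrow> w"
      "\<forall>k. x + t k *\<^sub>R wk k \<in> C"
    by (auto simp: mem_tangent_cone_iff)
  then have "C \<noteq> {}" by auto
  have "\<exists>z. z \<in> C \<and> (\<forall>c\<in>C. dist a z \<le> dist a c)" for a
    by (rule distance_attains_inf[OF assms(1) \<open>C \<noteq> {}\<close>, of a]) blast
  then have "\<forall>k. \<exists>z. z \<in> C \<and> (\<forall>c\<in>C. dist (x + t k *\<^sub>R p) z \<le> dist (x + t k *\<^sub>R p) c)"
    by blast
  then obtain Z where Z: "\<forall>k. Z k \<in> C \<and> (\<forall>c\<in>C. dist (x + t k *\<^sub>R p) (Z k) \<le> dist (x + t k *\<^sub>R p) c)"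
    by metis
  define q where "q k = (1 / t k) *\<^sub>R (Z k - x)" for k
  have Zq: "Z k = x + t k *\<^sub>R q k" for k
    using t(2)[rule_format, of k] by (simp add: q_def)
  have in_C: "\<forall>k. x + t k *\<^sub>R q k \<in> C"
    and nearest: "\<forall>k. \<forall>c\<in>C. dist (x + t k *\<^sub>R p) (x + t k *\<^sub>R q k) \<le> dist (x + t k *\<^sub>R p) c"
    using Z by (simp_all add: Zq[symmetric])
  have "norm (p - q k) \<le> norm (p - wk k)" for k
  proof -
    have "dist (x + t k *\<^sub>R p) (x + t k *\<^sub>R q k) \<le> dist (x + t k *\<^sub>R p) (x + t k *\<^sub>R wk k)"
      using nearest t(5) by blast
    then have "norm (t k *\<^sub>R (p - q k)) \<le> norm (t k *\<^sub>R (p - wk k))"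
      by (simp add: dist_norm algebra_simps)
    then show ?thesis using t(2)[rule_format, of k] by simp
  qed
  then show thesis
    using that t(2,3,4) in_C nearest by blast
qed

lemma tangent_cone_nearest_points_limit:
  fixes C :: "'a::euclidean_space set"
  assumes "closed C" and "w \<in> tangent_cone C x"
  obtains t q l where "\<forall>k. t k > 0" "t \<longlonglongrightarrow> 0" "q \<longlonglongrightarrow> l" "l \<in> tangent_cone C x"
    "norm (p - l) \<le> norm (p - w)" "\<forall>k. x + t k *\<^sub>R q k \<in> C"
    "\<forall>k. \<forall>c\<in>C. dist (x + t k *\<^sub>R p) (x + t k *\<^sub>R q k) \<le> dist (x + t k *\<^sub>R p) c"
proof -
  obtain t wk q where t: "\<forall>k. t k > 0" "t \<longlonglongrightarrow> 0" "wk \<longlonglongrightarrow> w" and in_C: "\<forall>k. x + t k *\<^sub>R q k \<in> C"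
    and nearest: "\<forall>k. \<forall>c\<in>C. dist (x + t k *\<^sub>R p) (x + t k *\<^sub>R q k) \<le> dist (x + t k *\<^sub>R p) c"
    and pq: "\<forall>k. norm (p - q k) \<le> norm (p - wk k)"
    using tangent_cone_nearest_points[OF assms] by blast
  have "(\<lambda>k. p - wk k) \<longlonglongrightarrow> p - w"
    by (intro tendsto_intros t(3))
  then have "bounded (range (\<lambda>k. p - wk k))"
    by (rule convergent_imp_bounded)
  then obtain R where R: "\<forall>k. norm (p - wk k) \<le> R"
    by (auto simp: bounded_iff)
  have "q k \<in> cball p R" for k
    using order_trans[OF pq[rule_format, of k] R[rule_format, of k]] by (simp add: dist_norm)
  then have "bounded (range q)"
    by (blast intro: bounded_subset[OF bounded_cball])
  moreover have "x \<in> C"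
    using assms(2) by (rule tangent_cone_base)
  ultimately obtain r l where r: "strict_mono r" "(q \<circ> r) \<longlonglongrightarrow> l" "l \<in> tangent_cone C x"
    using tangent_cone_subseq_limit[OF _ t(1,2) in_C] by blast
  have "(\<lambda>k. norm (p - (q \<circ> r) k)) \<longlonglongrightarrow> norm (p - l)"
    by (intro tendsto_intros r(2))
  moreover have "(\<lambda>k. norm (p - (wk \<circ> r) k)) \<longlonglongrightarrow> norm (p - w)"
    by (intro tendsto_intros LIMSEQ_subseq_LIMSEQ[OF t(3) r(1)])
  ultimately have "norm (p - l) \<le> norm (p - w)"
    using pq by (intro tendsto_le[OF trivial_limit_sequentially]) auto
  moreover have "(t \<circ> r) \<longlonglongrightarrow> 0"
    using LIMSEQ_subseq_LIMSEQ[OF t(2) r(1)] .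
  ultimately show thesis
    using t(1) in_C nearest r(2,3) by (intro that[of "t \<circ> r" "q \<circ> r" l]) auto
qed

lemma norm_le_of_dist_le_of_inner_le:
  fixes v d :: "'a::real_inner"
  assumes "norm (\<delta> *\<^sub>R v - d) \<le> \<delta> * norm v" "v \<bullet> d \<le> c * norm d" "\<delta> > 0" "c \<ge> 0"
  shows "norm d \<le> 2 * \<delta> * c"
proof (cases "d = 0")
  case True
  then show ?thesis using assms(3,4) by simp
next
  case False
  have "\<delta> * (v \<bullet> d) = ((\<delta> * norm v)\<^sup>2 + (norm d)\<^sup>2 - (norm (\<delta> *\<^sub>R v - d))\<^sup>2) / 2"
    using dot_norm_neg[of "\<delta> *\<^sub>R v" d] assms(3) by simp
  moreover have "(norm (\<delta> *\<^sub>R v - d))\<^sup>2 \<le> (\<delta> * norm v)\<^sup>2"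
    using assms(1) by (simp add: power_mono)
  ultimately have "(norm d)\<^sup>2 \<le> 2 * (\<delta> * (v \<bullet> d))"
    by (simp add: field_simps)
  also have "\<dots> \<le> 2 * (\<delta> * (c * norm d))"
    using assms(2,3) by simp
  finally have "norm d * norm d \<le> (2 * \<delta> * c) * norm d"
    by (simp add: power2_eq_square algebra_simps)
  then show ?thesis
    using False by simp
qed

lemma regular_normal_cone_ball_bound:
  fixes K :: "'a::euclidean_space set"
  assumes v: "v \<in> regular_normal_cone K w" and "e > 0"
  obtains \<delta> where "\<delta> > 0"
    "\<And>l. l \<in> K \<Longrightarrow> norm (w + \<delta> *\<^sub>R v - l) \<le> \<delta> * norm v \<Longrightarrow> norm (l - w) < \<delta> * e"
proof -
  obtain \<rho> where "\<rho> > 0" and \<rho>: "\<And>q. q \<in> K \<Longrightarrow> norm (q - w) < \<rho> \<Longrightarrow>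
      v \<bullet> (q - w) \<le> e / 4 * norm (q - w)"
    using regular_normal_cone_local_bound[OF v, of "e / 4"] \<open>e > 0\<close> by auto
  define \<delta> where "\<delta> = \<rho> / (2 * norm v + 2)"
  have "2 * norm v + 2 > 0"
    using norm_ge_zero[of v] by linarith
  then have "\<delta> > 0" and "\<delta> * (2 * norm v + 2) = \<rho>"
    using \<open>\<rho> > 0\<close> by (simp_all add: \<delta>_def)
  then have "2 * \<delta> * norm v < \<rho>"
    by (simp add: algebra_simps)
  have "norm (l - w) < \<delta> * e"
    if "l \<in> K" and ball: "norm (w + \<delta> *\<^sub>R v - l) \<le> \<delta> * norm v" for l
  proof -
    have "norm (l - w) \<le> norm (l - (w + \<delta> *\<^sub>R v)) + norm (\<delta> *\<^sub>R v)"
      using norm_triangle_ineq[of "l - (w + \<delta> *\<^sub>R v)" "\<delta> *\<^sub>R v"] by simp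
    then have "norm (l - w) < \<rho>"
      using ball \<open>\<delta> > 0\<close> \<open>2 * \<delta> * norm v < \<rho>\<close> by (simp add: norm_minus_commute)
    then have "v \<bullet> (l - w) \<le> e / 4 * norm (l - w)"
      using \<rho> \<open>l \<in> K\<close> by blast
    moreover have "norm (\<delta> *\<^sub>R v - (l - w)) \<le> \<delta> * norm v"
      using ball by (simp add: algebra_simps)
    ultimately have "norm (l - w) \<le> 2 * \<delta> * (e / 4)"
      using \<open>\<delta> > 0\<close> \<open>e > 0\<close> by (intro norm_le_of_dist_le_of_inner_le) auto
    then show ?thesis
      using mult_pos_pos[OF \<open>\<delta> > 0\<close> \<open>e > 0\<close>] by simp
  qed
  with \<open>\<delta> > 0\<close> show thesis by (rule that)
qed

lemma regular_normal_cone_tangent_cone_approx: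
  fixes C :: "'a::euclidean_space set"
  assumes "closed C" and v: "v \<in> regular_normal_cone (tangent_cone C x) w" and "e > 0"
  obtains x' u where "x' \<in> C" "dist x' x < e" "u \<in> regular_normal_cone C x'" "dist u v < e"
proof -
  have w: "w \<in> tangent_cone C x"
    using v by (simp add: mem_regular_normal_cone_iff)
  obtain \<delta> where "\<delta> > 0" and \<delta>: "\<And>l. l \<in> tangent_cone C x \<Longrightarrow>
      norm (w + \<delta> *\<^sub>R v - l) \<le> \<delta> * norm v \<Longrightarrow> norm (l - w) < \<delta> * e"
    using regular_normal_cone_ball_bound[OF v \<open>e > 0\<close>] by blast
  define p where "p = w + \<delta> *\<^sub>R v"
  obtain t q l where t: "\<forall>k. t k > 0" "t \<longlonglongrightarrow> 0" and q: "q \<longlonglongrightarrow> l" and l: "l \<in> tangent_cone C x"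
    and pl: "norm (p - l) \<le> norm (p - w)" and in_C: "\<forall>k. x + t k *\<^sub>R q k \<in> C"
    and nearest: "\<forall>k. \<forall>c\<in>C. dist (x + t k *\<^sub>R p) (x + t k *\<^sub>R q k) \<le> dist (x + t k *\<^sub>R p) c"
    using tangent_cone_nearest_points_limit[OF assms(1) w] by blast
  have "norm (l - w) < \<delta> * e"
    using \<delta>[OF l] pl \<open>\<delta> > 0\<close> by (simp add: p_def)
  moreover have "(\<lambda>k. norm (q k - w)) \<longlonglongrightarrow> norm (l - w)"
    by (intro tendsto_intros q)
  moreover have "(\<lambda>k. t k * norm (q k)) \<longlonglongrightarrow> 0 * norm l"
    by (intro tendsto_intros t(2) q)
  ultimately have "eventually (\<lambda>k. norm (q k - w) < \<delta> * e \<and> t k * norm (q k) < e) sequentially"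
    using \<open>e > 0\<close> by (auto intro: eventually_conj order_tendstoD(2))
  then obtain k where k: "norm (q k - w) < \<delta> * e" "t k * norm (q k) < e"
    using eventually_happens'[OF trivial_limit_sequentially] by blast
  define u where "u = (1 / (\<delta> * t k)) *\<^sub>R ((x + t k *\<^sub>R p) - (x + t k *\<^sub>R q k))"
  have "u - v = (1 / \<delta>) *\<^sub>R (w - q k)"
    using t(1)[rule_format, of k] \<open>\<delta> > 0\<close> by (simp add: u_def p_def algebra_simps)
  then have "dist u v = norm (q k - w) / \<delta>"
    using \<open>\<delta> > 0\<close> by (simp add: dist_norm norm_minus_commute)
  also have "\<dots> < e"
    using k(1) \<open>\<delta> > 0\<close> by (simp add: pos_divide_less_eq algebra_simps)
  finally have "dist u v < e" .
  moreover have "u \<in> regular_normal_cone C (x + t k *\<^sub>R q k)"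
    unfolding u_def using in_C nearest \<open>\<delta> > 0\<close> t(1)[rule_format, of k]
    by (intro proximal_normal_in_regular_normal_cone) auto
  moreover have "dist (x + t k *\<^sub>R q k) x < e"
    using k(2) t(1)[rule_format, of k] by (simp add: dist_norm)
  ultimately show thesis
    using in_C that by blast
qed

lemma regular_normal_cone_tangent_cone_subset:
  fixes C :: "'a::euclidean_space set"
  assumes "closed C"
  shows "regular_normal_cone (tangent_cone C x) w \<subseteq> limiting_normal_cone C x"
proof
  fix v assume v: "v \<in> regular_normal_cone (tangent_cone C x) w"
  then have "x \<in> C"
    by (auto simp: mem_regular_normal_cone_iff intro: tangent_cone_base)
  then show "v \<in> limiting_normal_cone C x"
    unfolding limiting_normal_cone_approachable
    using regular_normal_cone_tangent_cone_approx[OF assms v] by blast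
qed

lemma limiting_normal_cone_tangent_cone_subset:
  fixes C :: "'a::euclidean_space set"
  assumes "closed C"
  shows "limiting_normal_cone (tangent_cone C x) w \<subseteq> limiting_normal_cone C x"
proof
  fix v assume "v \<in> limiting_normal_cone (tangent_cone C x) w"
  then obtain zk uk where "uk \<longlonglongrightarrow> v" "\<forall>k. uk k \<in> regular_normal_cone (tangent_cone C x) (zk k)"
    by (auto simp: mem_limiting_normal_cone_iff)
  with regular_normal_cone_tangent_cone_subset[OF assms] show "v \<in> limiting_normal_cone C x"
    using closed_limiting_normal_cone closed_sequentially by blast
qed

lemma closed_ho_tangent_cone: "closed (ho_tangent_cone D y v k)"
  by (cases k) (simp_all add: closed_tangent_cone)

lemma limiting_normal_cone_ho_tangent_cone_subset:
  fixes D :: "'a::euclidean_space set"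
  shows "limiting_normal_cone (ho_tangent_cone D y v k) (v (Suc k))
           \<subseteq> limiting_normal_cone (tangent_cone D y) (v 1)"
proof (induction k)
  case 0
  then show ?case by simp
next
  case (Suc k)
  have "limiting_normal_cone (ho_tangent_cone D y v (Suc k)) (v (Suc (Suc k)))
          \<subseteq> limiting_normal_cone (ho_tangent_cone D y v k) (v (Suc k))"
    using limiting_normal_cone_tangent_cone_subset[OF closed_ho_tangent_cone] by simp
  with Suc.IH show ?case by blast
qed

theorem lemma4p3:
  fixes D :: "(real ^ 's) set" and y :: "real ^ 's"
    and v :: "nat \<Rightarrow> real ^ 's" and l :: nat
  assumes "closed D" and "y \<in> D" and "l \<ge> 1"
  shows "regular_normal_cone (ho_tangent_cone D y v (l - 1)) (v l)
           \<subseteq> limiting_normal_cone (ho_tangent_cone D y v (l - 1)) (v l)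
       \<and> limiting_normal_cone (ho_tangent_cone D y v (l - 1)) (v l)
           \<subseteq> limiting_normal_cone (tangent_cone D y) 0
       \<and> limiting_normal_cone (tangent_cone D y) 0 \<subseteq> limiting_normal_cone D y"
proof -
  obtain k where l: "l = Suc k"
    using \<open>l \<ge> 1\<close> by (cases l) auto
  have "limiting_normal_cone (ho_tangent_cone D y v k) (v (Suc k))
          \<subseteq> limiting_normal_cone (tangent_cone D y) 0"
    using limiting_normal_cone_ho_tangent_cone_subset[of D y v k]
      limiting_normal_cone_subset_at_0_of_cone[OF cone_tangent_cone]
    by blast
  then show ?thesis
    using regular_normal_cone_subset_limiting_normal_cone
      limiting_normal_cone_tangent_cone_subset[OF \<open>closed D\<close>]
    by (simp add: l)
qed

end
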